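(* Let $X$ be a nonempty set and let $Z\subset\{0,1\}^X$ be a nonempty finite linearly dependent set of nonzero vectors, and put $p=|Z|-1$. Then there exist integers $(\Delta_w)_{w\in Z}$, not all zero, such that $|\Delta_w|\le a(p)$ for each $w\in Z$ and $\sum_{w\in Z}\Delta_w\, w=0$.
   Context: $\{0,1\}^X\subset\mathbb{R}^X$ is the set of functions $X\to\{0,1\}$, viewed as vectors in the real vector space $\mathbb{R}^X$. For a positive integer $p$, $a(p)$ denotes the maximum determinant of a $p\times p$ matrix all of whose entries are $0$ or $1$. *)

theory Defs
  imports Main "HOL-Library.Function_Algebras" "Jordan_Normal_Form.Determinant"
begin

definition fscale :: "real \<Rightarrow> ('x \<Rightarrow> real) \<Rightarrow> ('x \<Rightarrow> real)" where
  "fscale c f = (\<lambda>x. c * f x)"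

(* a(p): maximum determinant of a p x p matrix with all entries 0 or 1 *)
definition max_det01 :: "nat \<Rightarrow> real" where
  "max_det01 p = Max {det A | A :: real mat. A \<in> carrier_mat p p \<and>
      (\<forall>i<p. \<forall>j<p. A $$ (i, j) \<in> {0, 1})}"

end

theory Submission
  imports Defs
begin

text \<open>
  Let \<open>M\<close> be a nonsingular square submatrix of maximal size \<open>k\<close> of the 0/1 matrix whose
  columns are the vectors of \<open>Z\<close>; a nontrivial dependence among them forces \<open>k < |Z|\<close>.
  Bordering \<open>M\<close> by one more column \<open>w\<^sub>0 \<in> Z\<close> and an arbitrary row \<open>x\<close> gives a singular
  matrix by maximality. Expanding its determinant along the new row yields
  \<open>\<Sum>\<^sub>c C\<^sub>c w\<^sub>c(x) = 0\<close>, where the coefficients \<open>C\<^sub>c\<close> do not depend on \<open>x\<close>, are signed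
  \<open>k \<times> k\<close> 0/1 minors (hence integers bounded by \<open>a(k) \<le> a(p)\<close>), and the coefficient of
  \<open>w\<^sub>0\<close> is \<open>det M \<noteq> 0\<close>.
\<close>

lemma sum_fun_apply: "(\<Sum>v\<in>A. f v) x = (\<Sum>v\<in>A. f v x)"
  by (induction A rule: infinite_finite_induct) auto

lemma module_fscale: "Modules.module fscale"
  by unfold_locales (auto simp: fscale_def fun_eq_iff algebra_simps)

lemma fscale_dependent_imp_vanishing_combination:
  assumes "finite Z" and "module.dependent fscale Z"
  obtains u where "\<exists>w\<in>Z. u w \<noteq> 0" and "\<forall>x. (\<Sum>w\<in>Z. u w * w x) = 0"
proof -
  obtain u where "\<exists>w\<in>Z. u w \<noteq> 0" and "(\<Sum>w\<in>Z. fscale (u w) w) = 0"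
    using module.dependent_finite[OF module_fscale assms(1)] assms(2) by blast
  moreover have "(\<Sum>w\<in>Z. u w * w x) = 0" for x
  proof -
    have "(\<Sum>w\<in>Z. fscale (u w) w) x = 0"
      using \<open>(\<Sum>w\<in>Z. fscale (u w) w) = 0\<close> by simp
    then show ?thesis
      by (simp add: sum_fun_apply fscale_def)
  qed
  ultimately show thesis
    using that by blast
qed

definition zero_one_mat :: "nat \<Rightarrow> real mat \<Rightarrow> bool" where
  "zero_one_mat n A \<longleftrightarrow> A \<in> carrier_mat n n \<and> (\<forall>i<n. \<forall>j<n. A $$ (i, j) \<in> {0, 1})"

lemma Ints_det_zero_one_mat:
  assumes "zero_one_mat n A"
  shows "det A \<in> \<int>"
proof -
  have A: "A \<in> carrier_mat n n"
    using assms by (simp add: zero_one_mat_def)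
  have "A $$ (i, p i) \<in> \<int>" if "p permutes {0..<n}" "i \<in> {0..<n}" for p i
  proof -
    have "A $$ (i, p i) \<in> {0, 1}"
      using assms that permutes_in_image[OF that(1)] by (simp add: zero_one_mat_def)
    then show ?thesis by auto
  qed
  then show ?thesis
    unfolding det_def'[OF A] by (intro Ints_sum Ints_mult Ints_prod Ints_of_int) auto
qed

lemma finite_zero_one_mat: "finite {A. zero_one_mat n A}"
proof (rule finite_subset)
  let ?I = "{0..<n} \<times> {0..<n}"
  show "{A. zero_one_mat n A} \<subseteq> (\<lambda>h. mat n n h) ` (?I \<rightarrow>\<^sub>E {0, 1})"
  proof
    fix A assume "A \<in> {A. zero_one_mat n A}"
    then have "A = mat n n (restrict (\<lambda>ij. A $$ ij) ?I)"
      and "restrict (\<lambda>ij. A $$ ij) ?I \<in> ?I \<rightarrow>\<^sub>E {0, 1}"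
      by (auto intro!: eq_matI simp: zero_one_mat_def PiE_iff simp del: insert_iff)
    then show "A \<in> (\<lambda>h. mat n n h) ` (?I \<rightarrow>\<^sub>E {0, 1})" by blast
  qed
qed (intro finite_imageI finite_PiE; simp)

lemma det_le_max_det01:
  assumes A: "zero_one_mat k A" and "k \<le> p"
  shows "det A \<le> max_det01 p"
proof -
  define d where "d = p - k"
  define B where "B = four_block_mat A (0\<^sub>m k d) (0\<^sub>m d k) (1\<^sub>m d)"
  have Ak: "A \<in> carrier_mat k k"
    using A by (simp add: zero_one_mat_def)
  have "B $$ (i, j) \<in> {0, 1}" if "i < p" "j < p" for i j
    using that A \<open>k \<le> p\<close> Ak
    by (cases "i < k"; cases "j < k") (auto simp: B_def d_def zero_one_mat_def)
  moreover have "B \<in> carrier_mat p p"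
    using Ak \<open>k \<le> p\<close> by (auto simp: B_def d_def)
  ultimately have "zero_one_mat p B"
    by (simp add: zero_one_mat_def)
  moreover have "det B = det A"
    using Ak unfolding B_def
    by (simp add: det_four_block_mat_upper_right_zero[of _ k _ d])
  moreover have "max_det01 p = Max (det ` {A. zero_one_mat p A})"
    by (simp add: max_det01_def zero_one_mat_def setcompr_eq_image)
  ultimately show ?thesis
    using finite_zero_one_mat by (metis Max_ge finite_imageI image_eqI mem_Collect_eq)
qed

lemma zero_one_mat_swaprows:
  assumes A: "zero_one_mat n A" and "k < n" "l < n"
  shows "zero_one_mat n (swaprows k l A)"
proof -
  have Ac: "A \<in> carrier_mat n n"
    using A by (simp add: zero_one_mat_def)
  have "swaprows k l A $$ (i, j) \<in> {0, 1}" if "i < n" "j < n" for i j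
    using that assms Ac by (auto simp: zero_one_mat_def simp del: insert_iff)
  with Ac show ?thesis
    by (simp add: zero_one_mat_def)
qed

lemma abs_det_le_max_det01:
  assumes A: "zero_one_mat k A" and "k \<le> p"
  shows "\<bar>det A\<bar> \<le> max_det01 p"
proof (cases "det A \<ge> 0")
  case True
  with det_le_max_det01[OF assms] show ?thesis by simp
next
  case False
  have Ac: "A \<in> carrier_mat k k"
    using A by (simp add: zero_one_mat_def)
  have "k \<ge> 2"
  proof (rule ccontr)
    assume "\<not> k \<ge> 2"
    then consider "k = 0" | "k = 1" by linarith
    then show False
    proof cases
      case 1
      with Ac False show False by simp
    next
      case 2
      with A Ac det_single[of A] have "det A \<in> {0, 1}"
        by (simp add: zero_one_mat_def)
      with False show False by auto
    qed
  qed
  then have "det (swaprows 0 1 A) = - det A"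
    using Ac by (intro det_swaprows) auto
  moreover have "zero_one_mat k (swaprows 0 1 A)"
    using A \<open>k \<ge> 2\<close> by (intro zero_one_mat_swaprows) auto
  ultimately show ?thesis
    using det_le_max_det01[OF _ \<open>k \<le> p\<close>, of "swaprows 0 1 A"] False by simp
qed

text \<open>
  Rows are indexed by the points \<open>f a\<close> of the domain, columns by the functions \<open>g b\<close>;
  neither indexing needs to be injective.
\<close>
definition minor_mat :: "(nat \<Rightarrow> 'x) \<Rightarrow> (nat \<Rightarrow> 'x \<Rightarrow> 'a) \<Rightarrow> nat \<Rightarrow> 'a mat" where
  "minor_mat f g k = mat k k (\<lambda>(a, b). g b (f a))"

lemma minor_mat_carrier [simp]: "minor_mat f g k \<in> carrier_mat k k"
  by (simp add: minor_mat_def)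

lemma zero_one_mat_minor_mat:
  assumes "\<forall>b<k. \<forall>x. g b x \<in> {0, 1}"
  shows "zero_one_mat k (minor_mat f g k)"
  using assms by (simp add: zero_one_mat_def minor_mat_def)

lemma inj_on_if_det_minor_mat_nonzero:
  fixes g :: "nat \<Rightarrow> 'x \<Rightarrow> 'a :: comm_ring_1"
  assumes "det (minor_mat f g k) \<noteq> 0"
  shows "inj_on g {..<k}"
proof (rule inj_onI, rule ccontr)
  fix a b assume ab: "a \<in> {..<k}" "b \<in> {..<k}" "g a = g b" "a \<noteq> b"
  then have "col (minor_mat f g k) a = col (minor_mat f g k) b"
    by (intro eq_vecI) (auto simp: minor_mat_def)
  with ab have "det (minor_mat f g k) = 0"
    by (intro det_identical_columns[OF minor_mat_carrier, of a b]) auto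
  with assms show False by simp
qed

lemma det_minor_mat_eq_0_if_combination:
  fixes u :: "('x \<Rightarrow> 'a :: idom) \<Rightarrow> 'a"
  assumes "finite Z" "g ` {..<card Z} \<subseteq> Z"
    and "\<exists>w\<in>Z. u w \<noteq> 0" "\<forall>x. (\<Sum>w\<in>Z. u w * w x) = 0"
  shows "det (minor_mat f g (card Z)) = 0"
proof (rule ccontr)
  let ?n = "card Z"
  assume nonsing: "det (minor_mat f g ?n) \<noteq> 0"
  then have inj: "inj_on g {..<?n}"
    by (rule inj_on_if_det_minor_mat_nonzero)
  with assms(1,2) have img: "g ` {..<?n} = Z"
    by (simp add: card_image card_subset_eq)
  define v where "v = vec ?n (\<lambda>b. u (g b))"
  have "v \<noteq> 0\<^sub>v ?n"
  proof -
    obtain w where "w \<in> Z" "u w \<noteq> 0"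
      using assms(3) by blast
    moreover obtain b where "b < ?n" "g b = w"
      using \<open>w \<in> Z\<close> img by (metis imageE lessThan_iff)
    ultimately have "v $ b \<noteq> 0"
      by (simp add: v_def)
    with \<open>b < ?n\<close> show ?thesis by auto
  qed
  moreover have "minor_mat f g ?n *\<^sub>v v = 0\<^sub>v ?n"
  proof (rule eq_vecI)
    fix a assume "a < dim_vec (0\<^sub>v ?n :: 'a vec)"
    then have "(minor_mat f g ?n *\<^sub>v v) $ a = (\<Sum>b<?n. u (g b) * g b (f a))"
      by (simp add: minor_mat_def v_def scalar_prod_def atLeast0LessThan mult.commute)
    also have "\<dots> = (\<Sum>w\<in>Z. u w * w (f a))"
      using sum.reindex[OF inj, of "\<lambda>w. u w * w (f a)"] img by simp
    finally show "(minor_mat f g ?n *\<^sub>v v) $ a = 0\<^sub>v ?n $ a"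
      using assms(4) \<open>a < _\<close> by simp
  qed (simp add: minor_mat_def)
  ultimately have "det (minor_mat f g ?n) = 0"
    using det_0_iff_vec_prod_zero[OF minor_mat_carrier] by (force simp: v_def)
  with nonsing show False by simp
qed

text \<open>\<open>h \<circ> insert_index c\<close> lists the columns \<open>h 0, \<dots>, h k\<close> with \<open>h c\<close> omitted.\<close>
lemma det_bordered_minor_mat:
  fixes h :: "nat \<Rightarrow> 'x \<Rightarrow> 'a :: comm_ring_1"
  shows "det (minor_mat (f(k := x)) h (Suc k))
    = (\<Sum>c<Suc k. (-1) ^ (k + c) * det (minor_mat f (h \<circ> insert_index c) k) * h c x)"
proof -
  let ?M = "minor_mat (f(k := x)) h (Suc k)"
  have "mat_delete ?M k c = minor_mat f (h \<circ> insert_index c) k" for c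
    by (intro eq_matI) (auto simp: mat_delete_def minor_mat_def insert_index_def)
  then have "?M $$ (k, c) * cofactor ?M k c
      = (-1) ^ (k + c) * det (minor_mat f (h \<circ> insert_index c) k) * h c x" if "c < Suc k" for c
    using that by (simp add: minor_mat_def cofactor_def)
  then show ?thesis
    by (simp add: laplace_expansion_row[OF minor_mat_carrier, of k])
qed

lemma exists_maximal_nonsingular_minor:
  fixes Z :: "('x \<Rightarrow> 'a :: idom) set"
  assumes "finite Z" and "\<exists>w\<in>Z. u w \<noteq> 0" and "\<forall>x. (\<Sum>w\<in>Z. u w * w x) = 0"
  obtains k f g where "k < card Z" and "g ` {..<k} \<subseteq> Z" and "det (minor_mat f g k) \<noteq> 0"
    and "\<And>f' g'. g' ` {..<Suc k} \<subseteq> Z \<Longrightarrow> det (minor_mat f' g' (Suc k)) = 0"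
proof -
  define P where "P k \<longleftrightarrow> (\<exists>f g. g ` {..<k} \<subseteq> Z \<and> det (minor_mat f g k) \<noteq> (0 :: 'a))" for k
  have bound: "k < card Z" if "P k" for k
  proof -
    from that obtain f g where gZ: "g ` {..<k} \<subseteq> Z" and nonsing: "det (minor_mat f g k) \<noteq> 0"
      unfolding P_def by blast
    then have "k \<le> card Z"
      using card_inj_on_le[OF inj_on_if_det_minor_mat_nonzero[OF nonsing] gZ assms(1)] by simp
    moreover have "k \<noteq> card Z"
      using det_minor_mat_eq_0_if_combination[OF assms(1) _ assms(2,3)] gZ nonsing by blast
    ultimately show ?thesis by simp
  qed
  have "P 0"
    by (auto simp: P_def det_dim_zero[OF minor_mat_carrier])
  then have "\<exists>k. P k \<and> (\<forall>k'. P k' \<longrightarrow> k' \<le> k)"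
    using ex_has_greatest_nat[of P 0 "\<lambda>k. k" "card Z"] bound by blast
  then obtain k where "P k" and greatest: "\<forall>k'. P k' \<longrightarrow> k' \<le> k"
    by blast
  then obtain f g where "g ` {..<k} \<subseteq> Z" and "det (minor_mat f g k) \<noteq> 0"
    unfolding P_def by blast
  then show thesis
  proof (rule that[OF bound[OF \<open>P k\<close>]])
    fix f' g' assume "g' ` {..<Suc k} \<subseteq> Z"
    show "det (minor_mat f' g' (Suc k)) = 0"
    proof (rule ccontr)
      assume "det (minor_mat f' g' (Suc k)) \<noteq> 0"
      with \<open>g' ` {..<Suc k} \<subseteq> Z\<close> have "P (Suc k)"
        unfolding P_def by blast
      with greatest show False by auto
    qed
  qed
qed

lemma exists_bordered_maximal_nonsingular_minor:
  fixes Z :: "('x \<Rightarrow> 'a :: idom) set"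
  assumes "finite Z" and "\<exists>w\<in>Z. u w \<noteq> 0" and "\<forall>x. (\<Sum>w\<in>Z. u w * w x) = 0"
  obtains k f h where "k < card Z" and "h ` {..<Suc k} \<subseteq> Z" and "inj_on h {..<Suc k}"
    and "det (minor_mat f h k) \<noteq> 0" and "\<forall>x. det (minor_mat (f(k := x)) h (Suc k)) = 0"
proof -
  obtain k f g where k: "k < card Z" and gZ: "g ` {..<k} \<subseteq> Z"
    and nonsing: "det (minor_mat f g k) \<noteq> 0"
    and maximal: "\<And>f' g'. g' ` {..<Suc k} \<subseteq> Z \<Longrightarrow> det (minor_mat f' g' (Suc k)) = 0"
    using exists_maximal_nonsingular_minor[OF assms] by metis
  have inj: "inj_on g {..<k}"
    using nonsing by (rule inj_on_if_det_minor_mat_nonzero)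
  have "\<not> Z \<subseteq> g ` {..<k}"
  proof
    assume "Z \<subseteq> g ` {..<k}"
    then have "card Z \<le> k"
      using card_mono[of "g ` {..<k}" Z] card_image_le[of "{..<k}" g] by simp
    with k show False by simp
  qed
  then obtain w where w: "w \<in> Z" "w \<notin> g ` {..<k}"
    by blast
  define h where "h = g(k := w)"
  have "h ` {..<Suc k} = insert w (g ` {..<k})"
    by (force simp: h_def lessThan_Suc)
  then have hZ: "h ` {..<Suc k} \<subseteq> Z"
    using gZ w by simp
  have "inj_on h {..<k}"
    using inj by (simp add: h_def inj_on_def)
  then have "inj_on h {..<Suc k}"
    using w by (simp add: h_def lessThan_Suc)
  moreover have "minor_mat f h k = minor_mat f g k"
    by (intro eq_matI) (auto simp: minor_mat_def h_def)
  then have "det (minor_mat f h k) \<noteq> 0"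
    using nonsing by simp
  ultimately show thesis
    using maximal[OF hZ] by (intro that[OF k hZ]) auto
qed

lemma int_combination_of_indexed_combination:
  fixes h :: "nat \<Rightarrow> 'x \<Rightarrow> real"
  assumes "finite Z" and "h ` {..<m} \<subseteq> Z" and "inj_on h {..<m}"
    and "\<forall>c<m. C c \<in> \<int> \<and> \<bar>C c\<bar> \<le> B" and "\<exists>c<m. C c \<noteq> 0"
    and "\<forall>x. (\<Sum>c<m. C c * h c x) = 0"
  shows "\<exists>\<Delta> :: ('x \<Rightarrow> real) \<Rightarrow> int. (\<exists>w\<in>Z. \<Delta> w \<noteq> 0)
           \<and> (\<forall>w\<in>Z. real_of_int \<bar>\<Delta> w\<bar> \<le> B)
           \<and> (\<forall>x. (\<Sum>w\<in>Z. real_of_int (\<Delta> w) * w x) = 0)"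
proof -
  define \<Delta> where
    "\<Delta> w = (if w \<in> h ` {..<m} then \<lfloor>C (the_inv_into {..<m} h w)\<rfloor> else 0)" for w
  have \<Delta>_h: "real_of_int (\<Delta> (h c)) = C c" if "c < m" for c
    using that assms(4) the_inv_into_f_f[OF assms(3)] by (auto simp: \<Delta>_def elim!: Ints_cases)
  from assms(5) obtain c0 where "c0 < m" "C c0 \<noteq> 0"
    by blast
  show ?thesis
  proof (intro exI[of _ \<Delta>] conjI ballI allI)
    show "\<exists>w\<in>Z. \<Delta> w \<noteq> 0"
      using assms(2) \<Delta>_h \<open>c0 < m\<close> \<open>C c0 \<noteq> 0\<close> by (metis image_subset_iff lessThan_iff of_int_0)
  next
    fix w assume "w \<in> Z"
    have "0 \<le> B"
      using assms(4) \<open>c0 < m\<close> by force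
    then show "real_of_int \<bar>\<Delta> w\<bar> \<le> B"
      using assms(4) \<Delta>_h by (cases "w \<in> h ` {..<m}") (auto simp: \<Delta>_def)
  next
    fix x
    have "(\<Sum>w\<in>Z. real_of_int (\<Delta> w) * w x) = (\<Sum>w\<in>h ` {..<m}. real_of_int (\<Delta> w) * w x)"
      using assms(1,2) by (intro sum.mono_neutral_right) (auto simp: \<Delta>_def)
    also have "\<dots> = (\<Sum>c<m. C c * h c x)"
      by (simp add: sum.reindex[OF assms(3)] \<Delta>_h)
    finally show "(\<Sum>w\<in>Z. real_of_int (\<Delta> w) * w x) = 0"
      using assms(6) by simp
  qed
qed

theorem lemma2:
  fixes Z :: "('x \<Rightarrow> real) set"
  assumes "finite Z" and "Z \<noteq> {}"
    and "\<forall>w\<in>Z. \<forall>x. w x \<in> {0, 1}"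
    and "\<forall>w\<in>Z. w \<noteq> (\<lambda>x. 0)"
    and "module.dependent fscale Z"
  shows "\<exists>\<Delta> :: ('x \<Rightarrow> real) \<Rightarrow> int. (\<exists>w\<in>Z. \<Delta> w \<noteq> 0)
           \<and> (\<forall>w\<in>Z. real_of_int \<bar>\<Delta> w\<bar> \<le> max_det01 (card Z - 1))
           \<and> (\<forall>x. (\<Sum>w\<in>Z. real_of_int (\<Delta> w) * w x) = 0)"
proof -
  obtain u where u: "\<exists>w\<in>Z. u w \<noteq> 0" "\<forall>x. (\<Sum>w\<in>Z. u w * w x) = 0"
    using fscale_dependent_imp_vanishing_combination[OF assms(1,5)] .
  obtain k f h where k: "k < card Z" and hZ: "h ` {..<Suc k} \<subseteq> Z" and inj: "inj_on h {..<Suc k}"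
    and nonsing: "det (minor_mat f h k) \<noteq> 0"
    and border: "\<forall>x. det (minor_mat (f(k := x)) h (Suc k)) = 0"
    using exists_bordered_maximal_nonsingular_minor[OF assms(1) u] .
  define C where "C c = (-1) ^ (k + c) * det (minor_mat f (h \<circ> insert_index c) k)" for c
  have "C c \<in> \<int> \<and> \<bar>C c\<bar> \<le> max_det01 (card Z - 1)" if "c < Suc k" for c
  proof -
    have "\<forall>b<k. (h \<circ> insert_index c) b \<in> Z"
      using hZ that by (auto simp: insert_index_def)
    then have "zero_one_mat k (minor_mat f (h \<circ> insert_index c) k)"
      using assms(3) by (intro zero_one_mat_minor_mat) blast
    then show ?thesis
      using Ints_det_zero_one_mat abs_det_le_max_det01 k by (simp add: C_def abs_mult)
  qed
  moreover have "minor_mat f (h \<circ> insert_index k) k = minor_mat f h k"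
    by (intro eq_matI) (simp_all add: minor_mat_def)
  then have "C k \<noteq> 0"
    using nonsing by (simp add: C_def flip: mult_2)
  moreover have "\<forall>x. (\<Sum>c<Suc k. C c * h c x) = 0"
    using border by (simp add: det_bordered_minor_mat C_def)
  ultimately show ?thesis
    using int_combination_of_indexed_combination[OF assms(1) hZ inj] by blast
qed

end
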